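(* Let $\alpha\in(0,1)$, $n\ge1$, and let $(x_{i1},x_{i2},y_i)\in\mathbb R^3$, $i=1,\dots,n$. Write $s_j(\theta)=\frac1n\sum_{i=1}^n\mathrm S^{\rm E}_{\alpha,\theta}(x_{ij},y_i)$ for $j=1,2$. Suppose that $s_1(\theta)\le s_2(\theta)$ for every $\theta\in\{x_{11},x_{12},y_1,\dots,x_{n1},x_{n2},y_n\}$, and that $\lim_{\theta\uparrow\theta_0}s_1(\theta)\le\lim_{\theta\uparrow\theta_0}s_2(\theta)$ for every $\theta_0\in\{x_{11},x_{12},\dots,x_{n1},x_{n2}\}$. Then $s_1(\theta)\le s_2(\theta)$ for every $\theta\in\mathbb R$, and consequently $\frac1n\sum_{i=1}^n\mathrm S(x_{i1},y_i)\le\frac1n\sum_{i=1}^n\mathrm S(x_{i2},y_i)$ for every $\mathrm S\in\mathcal S^{\rm E}_\alpha$ (i.e. $(x_{i1})_i$ dominates $(x_{i2})_i$ for $\alpha$-expectile prediction). In the case $\alpha=1/2$ the same conclusion holds if the condition at the points $\theta\in\{y_1,\dots,y_n\}$ is omitted.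
   Context: $(t)_+=\max(t,0)$. For convex $\phi:\mathbb R\to\mathbb R$, $\phi'$ is its left-hand derivative. $\mathcal S^{\rm E}_\alpha$ is the class of all scoring functions $\mathrm S(x,y)=|\mathbb 1(y<x)-\alpha|\,(\phi(y)-\phi(x)-\phi'(x)(y-x))$ with $\phi$ convex. The elementary expectile scoring function is $\mathrm S^{\rm E}_{\alpha,\theta}(x,y)=|\mathbb 1(y<x)-\alpha|\big((y-\theta)_+-(x-\theta)_+-(y-x)\mathbb 1(\theta<x)\big)$, i.e. it equals $(1-\alpha)|y-\theta|$ if $y\le\theta<x$, $\alpha|y-\theta|$ if $x\le\theta<y$, and $0$ otherwise. *)

theory Defs
  imports "HOL-Analysis.Analysis"
begin

definition pos_part :: "real \<Rightarrow> real" where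
  "pos_part t = max t 0"

definition left_deriv :: "(real \<Rightarrow> real) \<Rightarrow> real \<Rightarrow> real" where
  "left_deriv phi x = Lim (at_left x) (\<lambda>t. (phi x - phi t) / (x - t))"

definition expectile_score :: "real \<Rightarrow> (real \<Rightarrow> real) \<Rightarrow> real \<Rightarrow> real \<Rightarrow> real" where
  "expectile_score alpha phi x y =
     \<bar>of_bool (y < x) - alpha\<bar> * (phi y - phi x - left_deriv phi x * (y - x))"

definition elem_expectile_score :: "real \<Rightarrow> real \<Rightarrow> real \<Rightarrow> real \<Rightarrow> real" where
  "elem_expectile_score alpha theta x y =
     \<bar>of_bool (y < x) - alpha\<bar> *
       (pos_part (y - theta) - pos_part (x - theta) - (y - x) * of_bool (theta < x))"

definition avg_elem_score :: "real \<Rightarrow> nat \<Rightarrow> (nat \<Rightarrow> real) \<Rightarrow> (nat \<Rightarrow> real) \<Rightarrow> real \<Rightarrow> real" where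
  "avg_elem_score alpha n x y theta =
     (1 / real n) * (\<Sum>i<n. elem_expectile_score alpha theta (x i) (y i))"

end

theory Submission
  imports Defs
begin

text \<open>For fixed data, each averaged elementary score s_j(theta) is affine in theta on every
  half-open interval [t, r) containing no data point, vanishes outside the range of the data, and is
  continuous except at forecast points, where it jumps from the left. So on [t, r) the difference
  s_2 - s_1 is controlled by its value at t and its left limit at r, and nonnegativity at the data
  points and of the left limits at the forecast points propagates to every theta. For alpha = 1/2
  the elementary score depends on the forecast x only through the indicator of theta < x, so the
  observations are no breakpoints of s_2 - s_1.

  A convex phi agrees, together with its left derivative, on the finitely many data points with a
  linear spline with nonnegative kinks; the score generated by such a spline is the corresponding
  nonnegative combination of elementary scores, so the first claim implies the second.\<close>

section \<open>Left derivatives of convex functions\<close>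

lemma convex_on_left_deriv_tendsto:
  fixes phi :: "real \<Rightarrow> real"
  assumes cv: "convex_on UNIV phi"
  shows "((\<lambda>t. (phi x - phi t) / (x - t)) \<longlongrightarrow> left_deriv phi x) (at_left x)"
proof -
  let ?f = "\<lambda>t. (phi x - phi t) / (x - t)"
  have swap: "?f t = (phi t - phi x) / (t - x)" for t
    by (metis minus_diff_eq minus_divide_divide)
  have mono: "?f a \<le> ?f b" if "a \<le> b" "b < x" for a b
    using convex_on_slope_le(2)[OF cv _ _ _ \<open>b < x\<close>, of a] that
    by (cases "a = b") (auto simp: swap)
  have bound: "?f b \<le> (phi x - phi (x + 1)) / (x - (x + 1))" if "b < x" for b
    using convex_on_slope_le[OF cv _ _ that, of "x + 1"] by (simp add: swap)
  have "(?f \<longlongrightarrow> Sup (?f ` ({..<x} \<inter> UNIV))) (at x within ({..<x} \<inter> UNIV))"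
    by (rule Lim_left_bound) (use mono bound in auto)
  then have lim: "(?f \<longlongrightarrow> Sup (?f ` {..<x})) (at_left x)"
    by simp
  then have "left_deriv phi x = Sup (?f ` {..<x})"
    unfolding left_deriv_def by (intro tendsto_Lim) auto
  with lim show ?thesis
    by simp
qed

lemma convex_on_left_deriv_le_slope:
  fixes phi :: "real \<Rightarrow> real"
  assumes cv: "convex_on UNIV phi" and "p < q"
  shows "left_deriv phi p \<le> (phi p - phi q) / (p - q)"
proof (rule tendsto_le[OF _ tendsto_const convex_on_left_deriv_tendsto[OF cv]])
  have "(phi p - phi t) / (p - t) \<le> (phi p - phi q) / (p - q)" if "t < p" for t
  proof -
    have "(phi p - phi t) / (p - t) = (phi t - phi p) / (t - p)"
      by (metis minus_diff_eq minus_divide_divide)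
    also have "\<dots> \<le> (phi p - phi q) / (p - q)"
      using convex_on_slope_le[OF cv _ _ that \<open>p < q\<close>] by simp
    finally show ?thesis .
  qed
  then show "\<forall>\<^sub>F t in at_left p. (phi p - phi t) / (p - t) \<le> (phi p - phi q) / (p - q)"
    by (simp add: eventually_at_filter)
qed simp

lemma convex_on_slope_le_left_deriv:
  fixes phi :: "real \<Rightarrow> real"
  assumes cv: "convex_on UNIV phi" and "p < q"
  shows "(phi p - phi q) / (p - q) \<le> left_deriv phi q"
proof (rule tendsto_le[OF _ convex_on_left_deriv_tendsto[OF cv] tendsto_const])
  have "(phi p - phi q) / (p - q) \<le> (phi q - phi t) / (q - t)" if "p < t" "t < q" for t
  proof -
    have "(phi p - phi q) / (p - q) \<le> (phi t - phi q) / (t - q)"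
      using convex_on_slope_le(2)[OF cv _ _ that] by simp
    also have "\<dots> = (phi q - phi t) / (q - t)"
      by (metis minus_diff_eq minus_divide_divide)
    finally show ?thesis .
  qed
  then show "\<forall>\<^sub>F t in at_left q. (phi p - phi q) / (p - q) \<le> (phi q - phi t) / (q - t)"
    using eventually_at_left_real[OF \<open>p < q\<close>] by (rule eventually_mono[rotated]) auto
qed simp

text \<open>Between t and q, phi lies below the chord and above the tangent at t, which coincide.\<close>
lemma convex_on_left_deriv_eq_if_tangent:
  fixes phi :: "real \<Rightarrow> real"
  assumes cv: "convex_on UNIV phi" and "t < q"
    and tangent: "phi q = phi t + left_deriv phi t * (q - t)"
  shows "left_deriv phi q = left_deriv phi t"
proof -
  let ?g = "left_deriv phi t"
  have affine: "phi s = phi t + ?g * (s - t)" if "t < s" "s < q" for s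
  proof -
    have "phi s \<le> (phi q - phi t) / (q - t) * (s - t) + phi t"
      by (rule convex_onD_Icc') (use cv convex_on_subset that in auto)
    also have "(phi q - phi t) / (q - t) = ?g"
      using tangent \<open>t < q\<close> by (simp add: field_simps)
    finally have "phi s \<le> phi t + ?g * (s - t)"
      by simp
    moreover have "?g \<le> (phi t - phi s) / (t - s)"
      using convex_on_left_deriv_le_slope[OF cv \<open>t < s\<close>] .
    then have "?g * (s - t) \<le> phi s - phi t"
      using that by (simp add: field_simps)
    ultimately show ?thesis
      by simp
  qed
  have "\<forall>\<^sub>F s in at_left q. (phi q - phi s) / (q - s) = ?g"
    using eventually_at_left_real[OF \<open>t < q\<close>]
  proof (rule eventually_mono)
    fix s assume "s \<in> {t<..<q}"
    then show "(phi q - phi s) / (q - s) = ?g"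
      using affine[of s] tangent by (simp add: field_simps)
  qed
  then have "((\<lambda>s. (phi q - phi s) / (q - s)) \<longlongrightarrow> ?g) (at_left q)"
    by (rule tendsto_eventually)
  then show ?thesis
    unfolding left_deriv_def by (intro tendsto_Lim) auto
qed

text \<open>The kink u is where the left tangent at t meets the line through (q, phi q) with slope
  left_deriv phi q.\<close>
lemma convex_on_tangent_kink:
  fixes phi :: "real \<Rightarrow> real"
  assumes cv: "convex_on UNIV phi" and "t < q"
  obtains u where "t \<le> u" "u < q"
    "phi q = phi t + left_deriv phi t * (q - t) + (left_deriv phi q - left_deriv phi t) * (q - u)"
proof -
  let ?g = "left_deriv phi"
  have lower: "?g t * (q - t) \<le> phi q - phi t"
    using convex_on_left_deriv_le_slope[OF cv \<open>t < q\<close>] \<open>t < q\<close> by (simp add: field_simps)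
  have upper: "phi q - phi t \<le> ?g q * (q - t)"
    using convex_on_slope_le_left_deriv[OF cv \<open>t < q\<close>] \<open>t < q\<close> by (simp add: field_simps)
  show ?thesis
  proof (cases "?g q = ?g t")
    case True
    then show ?thesis
      using that[of t] lower upper \<open>t < q\<close> by simp
  next
    case False
    then have jump: "?g t < ?g q"
      using mult_right_le_imp_le[of "?g t" "q - t" "?g q"] lower upper \<open>t < q\<close> by fastforce
    have "?g t * (q - t) \<noteq> phi q - phi t"
      using convex_on_left_deriv_eq_if_tangent[OF cv \<open>t < q\<close>] False by fastforce
    then have excess: "0 < phi q - phi t - ?g t * (q - t)"
      using lower by simp
    define u where "u = q - (phi q - phi t - ?g t * (q - t)) / (?g q - ?g t)"
    show ?thesis
    proof (rule that[of u])
      show "t \<le> u"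
        using upper jump by (simp add: u_def field_simps)
      show "u < q"
        using excess jump by (simp add: u_def)
      show "phi q = phi t + ?g t * (q - t) + (?g q - ?g t) * (q - u)"
        using jump by (simp add: u_def)
    qed
  qed
qed

section \<open>Linear splines and the mixture representation\<close>

definition linear_spline :: "real \<Rightarrow> real \<Rightarrow> real set \<Rightarrow> (real \<Rightarrow> real) \<Rightarrow> real \<Rightarrow> real" where
  "linear_spline a b U c p = a + b * p + (\<Sum>u\<in>U. c u * pos_part (p - u))"

text \<open>The left derivative of linear_spline a b U c, hence the strict u < p.\<close>
definition linear_spline_slope :: "real \<Rightarrow> real set \<Rightarrow> (real \<Rightarrow> real) \<Rightarrow> real \<Rightarrow> real" where
  "linear_spline_slope b U c p = b + (\<Sum>u\<in>U. c u * of_bool (u < p))"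

lemma linear_spline_insert:
  assumes "finite U" "u \<notin> U"
  shows "linear_spline a b (insert u U) (c(u := k)) p = linear_spline a b U c p + k * pos_part (p - u)"
proof -
  have "(\<Sum>v\<in>U. (c(u := k)) v * pos_part (p - v)) = (\<Sum>v\<in>U. c v * pos_part (p - v))"
    by (rule sum.cong) (use assms in auto)
  then show ?thesis
    using assms by (simp add: linear_spline_def)
qed

lemma linear_spline_slope_insert:
  assumes "finite U" "u \<notin> U"
  shows "linear_spline_slope b (insert u U) (c(u := k)) p = linear_spline_slope b U c p + k * of_bool (u < p)"
proof -
  have "(\<Sum>v\<in>U. (c(u := k)) v * of_bool (v < p)) = (\<Sum>v\<in>U. c v * of_bool (v < p))"
    by (rule sum.cong) (use assms in auto)
  then show ?thesis
    using assms by (simp add: linear_spline_slope_def)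
qed

lemma linear_spline_right_of_knots:
  assumes "\<forall>u\<in>U. u < t" "t \<le> p"
  shows "linear_spline a b U c p = linear_spline a b U c t + linear_spline_slope b U c t * (p - t)"
    and "linear_spline_slope b U c p = linear_spline_slope b U c t"
proof -
  have "(\<Sum>u\<in>U. c u * pos_part (p - u)) = (\<Sum>u\<in>U. c u * pos_part (t - u) + c u * (p - t))"
    by (rule sum.cong) (use assms in \<open>auto simp: pos_part_def algebra_simps\<close>)
  also have "\<dots> = (\<Sum>u\<in>U. c u * pos_part (t - u)) + (\<Sum>u\<in>U. c u) * (p - t)"
    by (simp add: sum.distrib sum_distrib_right)
  finally have "(\<Sum>u\<in>U. c u * pos_part (p - u)) = (\<Sum>u\<in>U. c u * pos_part (t - u)) + (\<Sum>u\<in>U. c u) * (p - t)" .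
  moreover have "(\<Sum>u\<in>U. c u * of_bool (u < t)) = (\<Sum>u\<in>U. c u)"
    by (rule sum.cong) (use assms in auto)
  moreover have "(\<Sum>u\<in>U. c u * of_bool (u < p)) = (\<Sum>u\<in>U. c u)"
    by (rule sum.cong) (use assms in auto)
  ultimately show "linear_spline a b U c p = linear_spline a b U c t + linear_spline_slope b U c t * (p - t)"
    and "linear_spline_slope b U c p = linear_spline_slope b U c t"
    by (simp_all add: linear_spline_def linear_spline_slope_def algebra_simps)
qed

text \<open>Points are added in increasing order: the new maximum q costs one extra kink, provided by
  convex_on_tangent_kink and lying to the right of all earlier points, which therefore keep their
  values and slopes.\<close>
lemma convex_on_linear_spline_interpolation:
  fixes phi :: "real \<Rightarrow> real"
  assumes cv: "convex_on UNIV phi" and "finite A"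
  shows "\<exists>a b U c. finite U \<and> (\<forall>u\<in>U. 0 \<le> c u) \<and> (A \<noteq> {} \<longrightarrow> (\<forall>u\<in>U. u < Max A))
     \<and> (\<forall>p\<in>A. phi p = linear_spline a b U c p \<and> left_deriv phi p = linear_spline_slope b U c p)"
  using \<open>finite A\<close>
proof (induction A rule: finite_linorder_max_induct)
  case empty
  show ?case
    by blast
next
  case (insert q A)
  let ?g = "left_deriv phi"
  show ?case
  proof (cases "A = {}")
    case True
    then show ?thesis
      by (intro exI[of _ "phi q - ?g q * q"] exI[of _ "?g q"] exI[of _ "{}"])
        (simp add: linear_spline_def linear_spline_slope_def)
  next
    case False
    define t where "t = Max A"
    have "t \<in> A" "t < q" "\<forall>p\<in>A. p \<le> t" "Max (insert q A) = q"
      using False insert by (auto simp: t_def intro: Max_eqI)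
    obtain a b U c where U: "finite U" "\<forall>u\<in>U. 0 \<le> c u" "\<forall>u\<in>U. u < t"
      and interp: "\<forall>p\<in>A. phi p = linear_spline a b U c p \<and> ?g p = linear_spline_slope b U c p"
      using insert.IH False unfolding t_def by blast
    obtain u where u: "t \<le> u" "u < q"
      and kink: "phi q = phi t + ?g t * (q - t) + (?g q - ?g t) * (q - u)"
      using convex_on_tangent_kink[OF cv \<open>t < q\<close>] .
    have "?g t \<le> ?g q"
      using convex_on_left_deriv_le_slope[OF cv \<open>t < q\<close>] convex_on_slope_le_left_deriv[OF cv \<open>t < q\<close>]
      by linarith
    have "u \<notin> U"
      using U(3) u(1) by force
    let ?c = "c(u := ?g q - ?g t)"
    have "finite (insert u U)" "\<forall>v\<in>insert u U. 0 \<le> ?c v" "\<forall>v\<in>insert u U. v < Max (insert q A)"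
      using U u \<open>?g t \<le> ?g q\<close> \<open>t < q\<close> \<open>Max (insert q A) = q\<close> by auto
    moreover have "phi p = linear_spline a b (insert u U) ?c p \<and> ?g p = linear_spline_slope b (insert u U) ?c p"
      if "p \<in> insert q A" for p
    proof (cases "p = q")
      case True
      have "phi t = linear_spline a b U c t" "?g t = linear_spline_slope b U c t"
        using interp \<open>t \<in> A\<close> by auto
      moreover have "pos_part (q - u) = q - u"
        using u by (simp add: pos_part_def)
      ultimately show ?thesis
        using linear_spline_right_of_knots[OF U(3) less_imp_le[OF \<open>t < q\<close>]]
        using True kink u
        by (simp add: linear_spline_insert linear_spline_slope_insert U(1) \<open>u \<notin> U\<close>)
    next
      case False
      with that have "p \<le> u"
        using \<open>\<forall>p\<in>A. p \<le> t\<close> u(1) by force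
      with False that interp show ?thesis
        by (simp add: linear_spline_insert linear_spline_slope_insert U(1) \<open>u \<notin> U\<close> pos_part_def)
    qed
    ultimately show ?thesis
      by blast
  qed
qed

lemma expectile_score_linear_spline:
  assumes "phi x = linear_spline a b U c x" "phi y = linear_spline a b U c y"
    and "left_deriv phi x = linear_spline_slope b U c x"
  shows "expectile_score alpha phi x y = (\<Sum>u\<in>U. c u * elem_expectile_score alpha u x y)"
proof -
  define w where "w = \<bar>of_bool (y < x) - alpha\<bar>"
  have "(\<Sum>u\<in>U. c u * elem_expectile_score alpha u x y)
      = (\<Sum>u\<in>U. w * (c u * pos_part (y - u)) - w * (c u * pos_part (x - u))
          - (w * (y - x)) * (c u * of_bool (u < x)))"
    by (rule sum.cong) (auto simp: elem_expectile_score_def w_def algebra_simps)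
  also have "\<dots> = w * (\<Sum>u\<in>U. c u * pos_part (y - u)) - w * (\<Sum>u\<in>U. c u * pos_part (x - u))
      - (w * (y - x)) * (\<Sum>u\<in>U. c u * of_bool (u < x))"
    by (simp only: sum_subtractf sum_distrib_left)
  also have "\<dots> = expectile_score alpha phi x y"
    using assms unfolding expectile_score_def w_def[symmetric] linear_spline_def linear_spline_slope_def
    by (simp add: algebra_simps)
  finally show ?thesis
    by simp
qed

lemma expectile_score_mixture_on_finite:
  fixes phi :: "real \<Rightarrow> real"
  assumes "convex_on UNIV phi" "finite A"
  obtains U c where "finite U" "\<forall>u\<in>U. 0 \<le> c u"
    "\<And>x y. x \<in> A \<Longrightarrow> y \<in> A \<Longrightarrow>
       expectile_score alpha phi x y = (\<Sum>u\<in>U. c u * elem_expectile_score alpha u x y)"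
proof -
  obtain a b U c where "finite U" "\<forall>u\<in>U. 0 \<le> c u"
    and interp: "\<forall>p\<in>A. phi p = linear_spline a b U c p \<and> left_deriv phi p = linear_spline_slope b U c p"
    using convex_on_linear_spline_interpolation[OF assms] by blast
  show ?thesis
  proof (rule that)
    show "expectile_score alpha phi x y = (\<Sum>u\<in>U. c u * elem_expectile_score alpha u x y)"
      if "x \<in> A" "y \<in> A" for x y
      using interp that by (intro expectile_score_linear_spline) auto
  qed fact+
qed

section \<open>Piecewise affine functions\<close>

text \<open>Half-open intervals [t, r), since the scores are right-continuous in theta and jump only
  from the left at breakpoints.\<close>
definition piecewise_affine :: "real set \<Rightarrow> (real \<Rightarrow> real) \<Rightarrow> bool" where
  "piecewise_affine Q f \<longleftrightarrow>
     (\<forall>t r. t < r \<longrightarrow> {t<..<r} \<inter> Q = {} \<longrightarrow> (\<exists>a b. \<forall>\<theta>\<in>{t..<r}. f \<theta> = a + b * \<theta>))"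

lemma piecewise_affine_diff:
  assumes "piecewise_affine Q f" "piecewise_affine Q g"
  shows "piecewise_affine Q (\<lambda>\<theta>. f \<theta> - g \<theta>)"
  unfolding piecewise_affine_def
proof (intro allI impI)
  fix t r :: real assume "t < r" "{t<..<r} \<inter> Q = {}"
  with assms obtain a b a' b' where "\<forall>\<theta>\<in>{t..<r}. f \<theta> = a + b * \<theta>" "\<forall>\<theta>\<in>{t..<r}. g \<theta> = a' + b' * \<theta>"
    unfolding piecewise_affine_def by meson
  then show "\<exists>a b. \<forall>\<theta>\<in>{t..<r}. f \<theta> - g \<theta> = a + b * \<theta>"
    by (intro exI[of _ "a - a'"] exI[of _ "b - b'"]) (simp add: algebra_simps)
qed

lemma piecewise_affine_cmult:
  assumes "piecewise_affine Q f"
  shows "piecewise_affine Q (\<lambda>\<theta>. k * f \<theta>)"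
  unfolding piecewise_affine_def
proof (intro allI impI)
  fix t r :: real assume "t < r" "{t<..<r} \<inter> Q = {}"
  with assms obtain a b where "\<forall>\<theta>\<in>{t..<r}. f \<theta> = a + b * \<theta>"
    unfolding piecewise_affine_def by meson
  then show "\<exists>a b. \<forall>\<theta>\<in>{t..<r}. k * f \<theta> = a + b * \<theta>"
    by (intro exI[of _ "k * a"] exI[of _ "k * b"]) (simp add: algebra_simps)
qed

lemma piecewise_affine_sum:
  assumes "\<And>i. i \<in> I \<Longrightarrow> piecewise_affine Q (f i)"
  shows "piecewise_affine Q (\<lambda>\<theta>. \<Sum>i\<in>I. f i \<theta>)"
  using assms
proof (induction I rule: infinite_finite_induct)
  case (insert i I)
  have "piecewise_affine Q (\<lambda>\<theta>. f i \<theta> - (- 1) * (\<Sum>i\<in>I. f i \<theta>))"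
    using insert by (intro piecewise_affine_diff piecewise_affine_cmult) auto
  with insert.hyps show ?case
    by simp
qed (auto simp: piecewise_affine_def intro: exI[of _ 0])

lemma tendsto_at_left_affine:
  fixes f :: "real \<Rightarrow> real"
  assumes "t < r" "\<forall>\<theta>\<in>{t..<r}. f \<theta> = a + b * \<theta>"
  shows "(f \<longlongrightarrow> a + b * r) (at_left r)"
proof -
  have "((\<lambda>\<theta>. a + b * \<theta>) \<longlongrightarrow> a + b * r) (at_left r)"
    by (auto intro!: tendsto_eq_intros)
  moreover have "\<forall>\<^sub>F \<theta> in at_left r. a + b * \<theta> = f \<theta>"
    using eventually_at_left_real[OF \<open>t < r\<close>] by (rule eventually_mono) (use assms in auto)
  ultimately show ?thesis
    by (rule Lim_transform_eventually)
qed

lemma finite_left_gap: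
  fixes Q :: "real set"
  assumes "finite Q"
  obtains t where "t < r" "{t<..<r} \<inter> Q = {}"
proof
  let ?t = "Max (insert (r - 1) {q\<in>Q. q < r})"
  show "?t < r"
    using assms by (subst Max_less_iff) auto
  show "{?t<..<r} \<inter> Q = {}"
    using assms by (auto simp: not_less)
qed

lemma piecewise_affine_convergent_at_left:
  assumes "finite Q" "piecewise_affine Q f"
  shows "\<exists>L. (f \<longlongrightarrow> L) (at_left r)"
proof -
  obtain t where "t < r" "{t<..<r} \<inter> Q = {}"
    using finite_left_gap[OF \<open>finite Q\<close>] .
  with assms obtain a b where "\<forall>\<theta>\<in>{t..<r}. f \<theta> = a + b * \<theta>"
    unfolding piecewise_affine_def by meson
  with \<open>t < r\<close> show ?thesis
    by (blast intro: tendsto_at_left_affine)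
qed

text \<open>Between consecutive breakpoints t < r the function is affine on [t, r), so it is a convex
  combination of its value at t and its left limit at r.\<close>
lemma piecewise_affine_nonneg:
  fixes d :: "real \<Rightarrow> real"
  assumes "finite Q" "piecewise_affine Q d"
    and breakpoints: "\<And>q. q \<in> Q \<Longrightarrow> 0 \<le> d q \<and> 0 \<le> Lim (at_left q) d"
    and outside: "\<And>\<theta>. (\<forall>q\<in>Q. q < \<theta>) \<or> (\<forall>q\<in>Q. \<theta> < q) \<Longrightarrow> 0 \<le> d \<theta>"
  shows "0 \<le> d \<theta>"
proof (cases "\<theta> \<in> Q \<or> (\<forall>q\<in>Q. q < \<theta>) \<or> (\<forall>q\<in>Q. \<theta> < q)")
  case True
  then show ?thesis
    using breakpoints outside by blast
next
  case False
  define L where "L = {q\<in>Q. q < \<theta>}"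
  define R where "R = {q\<in>Q. \<theta> < q}"
  define t where "t = Max L"
  define r where "r = Min R"
  have "\<exists>q\<in>Q. q < \<theta>" "\<exists>q\<in>Q. \<theta> < q"
    using False by (auto simp: not_less order.order_iff_strict)
  then have "finite L" "L \<noteq> {}" "finite R" "R \<noteq> {}"
    using \<open>finite Q\<close> by (auto simp: L_def R_def)
  then have "t \<in> L" "r \<in> R" "\<forall>q\<in>L. q \<le> t" "\<forall>q\<in>R. r \<le> q"
    by (simp_all add: t_def r_def)
  then have "t \<in> Q" "t < \<theta>" "r \<in> Q" "\<theta> < r"
    by (auto simp: L_def R_def)
  moreover have "q \<notin> Q" if "t < q" "q < r" for q
    using that \<open>\<forall>q\<in>L. q \<le> t\<close> \<open>\<forall>q\<in>R. r \<le> q\<close> False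
    by (cases q \<theta> rule: linorder_cases) (auto simp: L_def R_def)
  ultimately have "t \<in> Q" "t < \<theta>" "r \<in> Q" "\<theta> < r" "{t<..<r} \<inter> Q = {}"
    by auto
  then obtain a b where affine: "\<forall>\<theta>\<in>{t..<r}. d \<theta> = a + b * \<theta>"
    using \<open>piecewise_affine Q d\<close> unfolding piecewise_affine_def by (metis less_trans)
  have "0 \<le> a + b * t"
    using breakpoints[OF \<open>t \<in> Q\<close>] affine \<open>t < \<theta>\<close> \<open>\<theta> < r\<close> by simp
  moreover have "Lim (at_left r) d = a + b * r"
    using tendsto_at_left_affine[OF _ affine] \<open>t < \<theta>\<close> \<open>\<theta> < r\<close> by (intro tendsto_Lim) auto
  then have "0 \<le> a + b * r"
    using breakpoints[OF \<open>r \<in> Q\<close>] by simp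
  moreover have "(r - t) * (a + b * \<theta>) = (r - \<theta>) * (a + b * t) + (\<theta> - t) * (a + b * r)"
    by (simp add: algebra_simps)
  ultimately have "0 \<le> (r - t) * (a + b * \<theta>)"
    using \<open>t < \<theta>\<close> \<open>\<theta> < r\<close> by simp
  then show ?thesis
    using affine \<open>t < \<theta>\<close> \<open>\<theta> < r\<close> by (simp add: zero_le_mult_iff)
qed

section \<open>Elementary scores as functions of the threshold\<close>

lemma less_iff_outside_gap:
  fixes x t r \<theta> :: real
  assumes "x \<notin> {t<..<r}" "\<theta> \<in> {t..<r}"
  shows "\<theta> < x \<longleftrightarrow> t < x"
  using assms by auto

lemma pos_part_outside_gap:
  fixes x t r \<theta> :: real
  assumes "x \<notin> {t<..<r}" "\<theta> \<in> {t..<r}"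
  shows "pos_part (x - \<theta>) = of_bool (t < x) * (x - \<theta>)"
  using assms by (auto simp: pos_part_def)

lemma elem_expectile_score_piecewise_affine:
  assumes "x \<in> Q" "y \<in> Q"
  shows "piecewise_affine Q (\<lambda>\<theta>. elem_expectile_score alpha \<theta> x y)"
  unfolding piecewise_affine_def
proof (intro allI impI)
  fix t r :: real assume "t < r" "{t<..<r} \<inter> Q = {}"
  then have gap: "x \<notin> {t<..<r}" "y \<notin> {t<..<r}"
    using assms by auto
  define w where "w = \<bar>of_bool (y < x) - alpha\<bar>"
  define Ix where "Ix = (of_bool (t < x) :: real)"
  define Iy where "Iy = (of_bool (t < y) :: real)"
  have "elem_expectile_score alpha \<theta> x y = w * (Iy * y - Ix * x - (y - x) * Ix) + w * (Ix - Iy) * \<theta>"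
    if "\<theta> \<in> {t..<r}" for \<theta>
  proof -
    have "elem_expectile_score alpha \<theta> x y = w * (Iy * (y - \<theta>) - Ix * (x - \<theta>) - (y - x) * Ix)"
      unfolding elem_expectile_score_def w_def Ix_def Iy_def
      by (simp only: less_iff_outside_gap[OF gap(1) that] pos_part_outside_gap[OF gap(1) that]
          pos_part_outside_gap[OF gap(2) that])
    then show ?thesis
      by (simp add: algebra_simps)
  qed
  then show "\<exists>a b. \<forall>\<theta>\<in>{t..<r}. elem_expectile_score alpha \<theta> x y = a + b * \<theta>"
    by blast
qed

lemma avg_elem_score_piecewise_affine:
  assumes "\<forall>i<n. x i \<in> Q \<and> y i \<in> Q"
  shows "piecewise_affine Q (avg_elem_score alpha n x y)"
  unfolding avg_elem_score_def using assms
  by (intro piecewise_affine_cmult piecewise_affine_sum elem_expectile_score_piecewise_affine) auto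

lemma elem_expectile_score_eq_0:
  assumes "\<theta> < x \<longleftrightarrow> \<theta> < y"
  shows "elem_expectile_score alpha \<theta> x y = 0"
  using assms by (auto simp: elem_expectile_score_def pos_part_def)

lemma elem_expectile_score_half:
  "elem_expectile_score (1/2) \<theta> x y = (pos_part (y - \<theta>) - (y - \<theta>) * of_bool (\<theta> < x)) / 2"
  by (auto simp: elem_expectile_score_def pos_part_def)

lemma avg_elem_score_half_diff:
  "avg_elem_score (1/2) n x2 y \<theta> - avg_elem_score (1/2) n x1 y \<theta>
     = (1 / real n) * (\<Sum>i<n. (y i - \<theta>) * (of_bool (\<theta> < x1 i) - of_bool (\<theta> < x2 i)) / 2)"
proof -
  have sums: "(\<Sum>i<n. elem_expectile_score (1/2) \<theta> (x2 i) (y i)) - (\<Sum>i<n. elem_expectile_score (1/2) \<theta> (x1 i) (y i))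
      = (\<Sum>i<n. (y i - \<theta>) * (of_bool (\<theta> < x1 i) - of_bool (\<theta> < x2 i)) / 2)"
    unfolding sum_subtractf[symmetric] elem_expectile_score_half
    by (rule sum.cong) (simp_all add: field_simps)
  show ?thesis
    unfolding avg_elem_score_def right_diff_distrib[symmetric] sums ..
qed

lemma avg_elem_score_half_diff_piecewise_affine:
  assumes "\<forall>i<n. x1 i \<in> Q \<and> x2 i \<in> Q"
  shows "piecewise_affine Q (\<lambda>\<theta>. avg_elem_score (1/2) n x2 y \<theta> - avg_elem_score (1/2) n x1 y \<theta>)"
proof -
  have "piecewise_affine Q (\<lambda>\<theta>. (y i - \<theta>) * (of_bool (\<theta> < x1 i) - of_bool (\<theta> < x2 i)) / 2)"
    if "i < n" for i
    unfolding piecewise_affine_def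
  proof (intro allI impI)
    fix t r :: real assume "t < r" "{t<..<r} \<inter> Q = {}"
    then have gap: "x1 i \<notin> {t<..<r}" "x2 i \<notin> {t<..<r}"
      using assms that by auto
    define I where "I = (of_bool (t < x1 i) - of_bool (t < x2 i) :: real)"
    have "(y i - \<theta>) * (of_bool (\<theta> < x1 i) - of_bool (\<theta> < x2 i)) / 2 = y i * I / 2 + (- I / 2) * \<theta>"
      if "\<theta> \<in> {t..<r}" for \<theta>
      using less_iff_outside_gap[OF gap(1) that] less_iff_outside_gap[OF gap(2) that]
      by (simp add: I_def algebra_simps)
    then show "\<exists>a b. \<forall>\<theta>\<in>{t..<r}. (y i - \<theta>) * (of_bool (\<theta> < x1 i) - of_bool (\<theta> < x2 i)) / 2 = a + b * \<theta>"
      by blast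
  qed
  then show ?thesis
    unfolding avg_elem_score_half_diff by (intro piecewise_affine_cmult piecewise_affine_sum) auto
qed

lemma isCont_elem_expectile_score:
  assumes "q \<noteq> x"
  shows "isCont (\<lambda>\<theta>. elem_expectile_score alpha \<theta> x y) q"
proof -
  have "\<forall>\<^sub>F \<theta> in nhds q. (\<theta> < x) = (q < x)"
  proof (cases "q < x")
    case True
    then show ?thesis
      using eventually_nhds_in_open[of "{..<x}" q] by (auto elim: eventually_mono)
  next
    case False
    with assms have "x < q"
      by simp
    then show ?thesis
      using eventually_nhds_in_open[of "{x<..}" q] by (auto elim: eventually_mono)
  qed
  then have "\<forall>\<^sub>F \<theta> in at q. (of_bool (\<theta> < x) :: real) = of_bool (q < x)"
    by (auto simp: eventually_at_filter elim: eventually_mono)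
  then have "isCont (\<lambda>\<theta>. of_bool (\<theta> < x) :: real) q"
    unfolding isCont_def by (rule tendsto_eventually)
  then show ?thesis
    unfolding elem_expectile_score_def pos_part_def by (intro continuous_intros)
qed

lemma tendsto_at_left_avg_elem_score:
  assumes "\<forall>i<n. x i \<noteq> q"
  shows "(avg_elem_score alpha n x y \<longlongrightarrow> avg_elem_score alpha n x y q) (at_left q)"
proof -
  have "isCont (avg_elem_score alpha n x y) q"
    unfolding avg_elem_score_def using assms
    by (intro continuous_intros isCont_elem_expectile_score) auto
  then show ?thesis
    unfolding isCont_def by (rule tendsto_mono[OF at_le[OF subset_UNIV]])
qed

lemma Lim_at_left_avg_elem_score_diff:
  "Lim (at_left q) (\<lambda>\<theta>. avg_elem_score alpha n x2 y \<theta> - avg_elem_score alpha n x1 y \<theta>)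
     = Lim (at_left q) (avg_elem_score alpha n x2 y) - Lim (at_left q) (avg_elem_score alpha n x1 y)"
proof -
  let ?Q = "x1 ` {..<n} \<union> x2 ` {..<n} \<union> y ` {..<n}"
  have "\<exists>L. (avg_elem_score alpha n x y \<longlongrightarrow> L) (at_left q)" if "x = x1 \<or> x = x2" for x
    using that by (intro piecewise_affine_convergent_at_left[of ?Q] avg_elem_score_piecewise_affine) auto
  then obtain L1 L2 where "(avg_elem_score alpha n x1 y \<longlongrightarrow> L1) (at_left q)"
    "(avg_elem_score alpha n x2 y \<longlongrightarrow> L2) (at_left q)"
    by blast
  then show ?thesis
    by (simp add: tendsto_Lim tendsto_diff)
qed

section \<open>Dominance\<close>

lemma avg_elem_score_dominance_half:
  fixes x1 x2 y :: "nat \<Rightarrow> real"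
  assumes breakpoints: "\<forall>q \<in> x1 ` {..<n} \<union> x2 ` {..<n}.
      avg_elem_score (1/2) n x1 y q \<le> avg_elem_score (1/2) n x2 y q
      \<and> Lim (at_left q) (avg_elem_score (1/2) n x1 y) \<le> Lim (at_left q) (avg_elem_score (1/2) n x2 y)"
  shows "avg_elem_score (1/2) n x1 y \<theta> \<le> avg_elem_score (1/2) n x2 y \<theta>"
proof -
  let ?X = "x1 ` {..<n} \<union> x2 ` {..<n}"
  have "0 \<le> avg_elem_score (1/2) n x2 y \<theta> - avg_elem_score (1/2) n x1 y \<theta>"
  proof (rule piecewise_affine_nonneg[of ?X "\<lambda>\<theta>. avg_elem_score (1/2) n x2 y \<theta> - avg_elem_score (1/2) n x1 y \<theta>"])
    show "piecewise_affine ?X (\<lambda>\<theta>. avg_elem_score (1/2) n x2 y \<theta> - avg_elem_score (1/2) n x1 y \<theta>)"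
      by (rule avg_elem_score_half_diff_piecewise_affine) auto
    show "0 \<le> avg_elem_score (1/2) n x2 y \<theta> - avg_elem_score (1/2) n x1 y \<theta>"
      if "(\<forall>q\<in>?X. q < \<theta>) \<or> (\<forall>q\<in>?X. \<theta> < q)" for \<theta>
    proof -
      have "\<forall>i<n. \<theta> < x1 i \<longleftrightarrow> \<theta> < x2 i"
        using that by (metis (no_types, lifting) Un_iff image_eqI lessThan_iff less_asym)
      then show ?thesis
        unfolding avg_elem_score_half_diff by simp
    qed
  qed (use breakpoints in \<open>auto simp: Lim_at_left_avg_elem_score_diff\<close>)
  then show ?thesis
    by simp
qed

lemma avg_elem_score_dominance:
  fixes x1 x2 y :: "nat \<Rightarrow> real"
  assumes forecast_points: "\<forall>q \<in> x1 ` {..<n} \<union> x2 ` {..<n}.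
      avg_elem_score alpha n x1 y q \<le> avg_elem_score alpha n x2 y q
      \<and> Lim (at_left q) (avg_elem_score alpha n x1 y) \<le> Lim (at_left q) (avg_elem_score alpha n x2 y)"
    and observation_points: "\<forall>q \<in> y ` {..<n}. avg_elem_score alpha n x1 y q \<le> avg_elem_score alpha n x2 y q"
  shows "avg_elem_score alpha n x1 y \<theta> \<le> avg_elem_score alpha n x2 y \<theta>"
proof -
  let ?X = "x1 ` {..<n} \<union> x2 ` {..<n}" and ?Q = "x1 ` {..<n} \<union> x2 ` {..<n} \<union> y ` {..<n}"
  let ?d = "\<lambda>\<theta>. avg_elem_score alpha n x2 y \<theta> - avg_elem_score alpha n x1 y \<theta>"
  have "0 \<le> ?d \<theta>"
  proof (rule piecewise_affine_nonneg[of ?Q ?d])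
    show "piecewise_affine ?Q ?d"
      by (intro piecewise_affine_diff avg_elem_score_piecewise_affine) auto
    show "0 \<le> ?d q \<and> 0 \<le> Lim (at_left q) ?d" if "q \<in> ?Q" for q
    proof (cases "q \<in> ?X")
      case True
      then show ?thesis
        using forecast_points by (simp add: Lim_at_left_avg_elem_score_diff)
    next
      case False
      then have "(?d \<longlongrightarrow> ?d q) (at_left q)"
        by (intro tendsto_diff tendsto_at_left_avg_elem_score) auto
      then have "Lim (at_left q) ?d = ?d q"
        by (intro tendsto_Lim) auto
      with False that observation_points show ?thesis
        by auto
    qed
    show "0 \<le> ?d \<theta>" if "(\<forall>q\<in>?Q. q < \<theta>) \<or> (\<forall>q\<in>?Q. \<theta> < q)" for \<theta>
    proof -
      have "avg_elem_score alpha n x y \<theta> = 0" if "x = x1 \<or> x = x2" for x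
      proof -
        have "\<forall>i<n. \<theta> < x i \<longleftrightarrow> \<theta> < y i"
          using \<open>(\<forall>q\<in>?Q. q < \<theta>) \<or> (\<forall>q\<in>?Q. \<theta> < q)\<close> that by (metis (no_types, lifting) Un_iff image_eqI lessThan_iff less_asym)
        then show ?thesis
          unfolding avg_elem_score_def by (simp add: elem_expectile_score_eq_0)
      qed
      then show ?thesis
        by simp
    qed
  qed simp
  then show ?thesis
    by simp
qed

lemma avg_expectile_score_eq_mixture:
  assumes "\<forall>i<n. expectile_score alpha phi (x i) (y i) = (\<Sum>u\<in>U. c u * elem_expectile_score alpha u (x i) (y i))"
  shows "(1 / real n) * (\<Sum>i<n. expectile_score alpha phi (x i) (y i)) = (\<Sum>u\<in>U. c u * avg_elem_score alpha n x y u)"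
proof -
  have "(\<Sum>i<n. expectile_score alpha phi (x i) (y i)) = (\<Sum>i<n. \<Sum>u\<in>U. c u * elem_expectile_score alpha u (x i) (y i))"
    using assms by simp
  also have "\<dots> = (\<Sum>u\<in>U. c u * (\<Sum>i<n. elem_expectile_score alpha u (x i) (y i)))"
    by (simp add: sum.swap[of _ "{..<n}"] sum_distrib_left)
  finally show ?thesis
    by (simp add: avg_elem_score_def sum_distrib_left mult.left_commute)
qed

lemma avg_expectile_score_le_if_avg_elem_score_le:
  fixes x1 x2 y :: "nat \<Rightarrow> real" and phi :: "real \<Rightarrow> real"
  assumes "convex_on UNIV phi"
    and dominance: "\<And>\<theta>. avg_elem_score alpha n x1 y \<theta> \<le> avg_elem_score alpha n x2 y \<theta>"
  shows "(1 / real n) * (\<Sum>i<n. expectile_score alpha phi (x1 i) (y i))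
      \<le> (1 / real n) * (\<Sum>i<n. expectile_score alpha phi (x2 i) (y i))"
proof -
  let ?A = "x1 ` {..<n} \<union> x2 ` {..<n} \<union> y ` {..<n}"
  have "finite ?A"
    by simp
  obtain U c where "finite U" "\<forall>u\<in>U. 0 \<le> c u" and mixture: "\<And>x y'. x \<in> ?A \<Longrightarrow> y' \<in> ?A \<Longrightarrow>
      expectile_score alpha phi x y' = (\<Sum>u\<in>U. c u * elem_expectile_score alpha u x y')"
    by (rule expectile_score_mixture_on_finite[where alpha = alpha, OF assms(1) \<open>finite ?A\<close>]) (rule that)
  have "(1 / real n) * (\<Sum>i<n. expectile_score alpha phi (x i) (y i)) = (\<Sum>u\<in>U. c u * avg_elem_score alpha n x y u)"
    if "x = x1 \<or> x = x2" for x
    using that by (intro avg_expectile_score_eq_mixture) (auto intro: mixture)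
  then show ?thesis
    using \<open>\<forall>u\<in>U. 0 \<le> c u\<close> dominance by (simp add: sum_mono mult_left_mono)
qed

theorem mainTheorem9:
  fixes alpha :: real and n :: nat and x1 x2 y :: "nat \<Rightarrow> real"
  assumes alpha: "0 < alpha" "alpha < 1"
    and n: "n \<ge> 1"
    and xpts: "\<forall>i<n. avg_elem_score alpha n x1 y (x1 i) \<le> avg_elem_score alpha n x2 y (x1 i)
                   \<and> avg_elem_score alpha n x1 y (x2 i) \<le> avg_elem_score alpha n x2 y (x2 i)"
    and ypts: "alpha = 1/2 \<or> (\<forall>i<n. avg_elem_score alpha n x1 y (y i) \<le> avg_elem_score alpha n x2 y (y i))"
    and leftlim: "\<forall>\<theta>0 \<in> x1 ` {..<n} \<union> x2 ` {..<n}.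
        Lim (at_left \<theta>0) (avg_elem_score alpha n x1 y) \<le> Lim (at_left \<theta>0) (avg_elem_score alpha n x2 y)"
  shows "(\<forall>\<theta>. avg_elem_score alpha n x1 y \<theta> \<le> avg_elem_score alpha n x2 y \<theta>)
       \<and> (\<forall>phi. convex_on UNIV phi \<longrightarrow>
            (1 / real n) * (\<Sum>i<n. expectile_score alpha phi (x1 i) (y i))
              \<le> (1 / real n) * (\<Sum>i<n. expectile_score alpha phi (x2 i) (y i)))"
proof (intro conjI allI impI)
  have forecast_points: "\<forall>q \<in> x1 ` {..<n} \<union> x2 ` {..<n}.
      avg_elem_score alpha n x1 y q \<le> avg_elem_score alpha n x2 y q
      \<and> Lim (at_left q) (avg_elem_score alpha n x1 y) \<le> Lim (at_left q) (avg_elem_score alpha n x2 y)"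
    using xpts leftlim by blast
  show dominance: "avg_elem_score alpha n x1 y \<theta> \<le> avg_elem_score alpha n x2 y \<theta>" for \<theta>
  proof (cases "alpha = 1/2")
    case True
    show ?thesis
      using forecast_points unfolding True by (rule avg_elem_score_dominance_half)
  next
    case False
    then show ?thesis
      using avg_elem_score_dominance[OF forecast_points] ypts by auto
  qed
  fix phi :: "real \<Rightarrow> real" assume "convex_on UNIV phi"
  then show "(1 / real n) * (\<Sum>i<n. expectile_score alpha phi (x1 i) (y i))
      \<le> (1 / real n) * (\<Sum>i<n. expectile_score alpha phi (x2 i) (y i))"
    using dominance by (rule avg_expectile_score_le_if_avg_elem_score_le)
qed

end
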